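(* Let $H_{ij}$, $i=1,\ldots,b$, $j=1,\ldots,s_i$, be $n=\sum_is_i$ null hypotheses with $p$-values $P_{ij}$, where true-null $p$-values are $U(0,1)$ and the rows $(P_{i1},\ldots,P_{is_i})$, $i=1,\ldots,b$, are mutually independent, with arbitrary dependence within each row. Fix $\alpha\in(0,1)$ and $\lambda$ with $(2b+3)^{-2/(b+2)}\le\lambda<1$, and let $\widehat n_0=(n-R(\lambda)+s_{\max})/(1-\lambda)$, where $s_{\max}=\max_is_i$ and $R(\lambda)=\#\{(i,j):P_{ij}\le\lambda\}$. The method that rejects $H_{ij}$ if and only if $P_{ij}\le\alpha/\widehat n_0$ has familywise error rate at most $\alpha$ for every configuration of true and false null hypotheses.
   Context: The familywise error rate is $\Pr(V\ge1)$, where $V$ is the number of rejected true null hypotheses. *)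

theory Defs
  imports "HOL-Probability.Probability"
begin

definition hyp_idx :: "nat \<Rightarrow> (nat \<Rightarrow> nat) \<Rightarrow> (nat \<times> nat) set" where
  "hyp_idx b s = {(i, j). i \<in> {1..b} \<and> j \<in> {1..s i}}"

definition n_total :: "nat \<Rightarrow> (nat \<Rightarrow> nat) \<Rightarrow> nat" where
  "n_total b s = (\<Sum>i=1..b. s i)"

definition s_max :: "nat \<Rightarrow> (nat \<Rightarrow> nat) \<Rightarrow> nat" where
  "s_max b s = Max (s ` {1..b})"

definition R_count :: "nat \<Rightarrow> (nat \<Rightarrow> nat) \<Rightarrow> (nat \<Rightarrow> nat \<Rightarrow> 'a \<Rightarrow> real) \<Rightarrow> real \<Rightarrow> 'a \<Rightarrow> nat" where
  "R_count b s P lam \<omega> = card {(i, j) \<in> hyp_idx b s. P i j \<omega> \<le> lam}"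

definition n0_hat :: "nat \<Rightarrow> (nat \<Rightarrow> nat) \<Rightarrow> (nat \<Rightarrow> nat \<Rightarrow> 'a \<Rightarrow> real) \<Rightarrow> real \<Rightarrow> 'a \<Rightarrow> real" where
  "n0_hat b s P lam \<omega> =
     (real (n_total b s) - real (R_count b s P lam \<omega>) + real (s_max b s)) / (1 - lam)"

end

theory Submission
  imports Defs
begin

(*
  For a true null H_ij let W_i (others_above lam i) count the true nulls outside block i whose
  p-value exceeds lam. Since n - R(lam) >= W_i, rejecting H_ij forces
  P_ij <= alpha (1 - lam) / (s_max + W_i). As P_ij is uniform and independent of W_i, this has
  probability alpha (1 - lam) E[1 / (s_max + W_i)] = alpha E[1{P_ij > lam} / (s_max + W_i)].
  Summed over the true nulls these weights (threshold_weight) are at most 1 pointwise: with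
  Y_i <= s_i <= s_max the number of true nulls of block i above lam, the sum is
  sum_i Y_i / (s_max + sum_{k <> i} Y_k) <= 1. The union bound finishes the proof.
*)

lemma sum_divide_leave_one_out_le_1:
  fixes y :: "'i \<Rightarrow> real"
  assumes "finite I" and y: "\<And>i. i \<in> I \<Longrightarrow> 0 \<le> y i \<and> y i \<le> S"
  shows "(\<Sum>i\<in>I. y i / (S + (\<Sum>k\<in>I - {i}. y k))) \<le> 1"
proof (cases "(\<Sum>k\<in>I. y k) = 0")
  case True
  then have "\<forall>i\<in>I. y i = 0"
    using sum_nonneg_eq_0_iff[OF \<open>finite I\<close>] y by blast
  then show ?thesis by simp
next
  case False
  define V where "V = (\<Sum>k\<in>I. y k)"
  have "V > 0" using False sum_nonneg[of I y] y unfolding V_def by force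
  have "(\<Sum>i\<in>I. y i / (S + (\<Sum>k\<in>I - {i}. y k))) \<le> (\<Sum>i\<in>I. y i / V)"
  proof (rule sum_mono)
    fix i assume "i \<in> I"
    then have "(\<Sum>k\<in>I - {i}. y k) = V - y i"
      unfolding V_def using \<open>finite I\<close> by (simp add: sum.remove)
    then show "y i / (S + (\<Sum>k\<in>I - {i}. y k)) \<le> y i / V"
      using y[OF \<open>i \<in> I\<close>] \<open>V > 0\<close> by (intro frac_le) auto
  qed
  also have "\<dots> = 1"
    using \<open>V > 0\<close> by (simp add: sum_divide_distrib[symmetric] V_def)
  finally show ?thesis .
qed

lemma measurable_entry_PiM:
  assumes "k \<in> K" "j \<in> J k"
  shows "(\<lambda>z. z k j) \<in> measurable (PiM K (\<lambda>k. PiM (J k) (\<lambda>_. N))) N"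
proof -
  have "(\<lambda>z. z k) \<in> measurable (PiM K (\<lambda>k. PiM (J k) (\<lambda>_. N))) (PiM (J k) (\<lambda>_. N))"
    using assms(1) by (rule measurable_component_singleton)
  moreover have "(\<lambda>x. x j) \<in> measurable (PiM (J k) (\<lambda>_. N)) N"
    using assms(2) by (rule measurable_component_singleton)
  ultimately show ?thesis by (rule measurable_compose)
qed

context prob_space
begin

lemma prob_uniform_le:
  assumes "X \<in> borel_measurable M" and "distr M lborel X = uniform_measure lborel {0<..<1}"
    and "0 \<le> x" "x \<le> 1"
  shows "prob {\<omega> \<in> space M. X \<omega> \<le> x} = x"
proof -
  have "prob {\<omega> \<in> space M. X \<omega> \<le> x} = measure (distr M lborel X) {..x}"
    using assms(1) by (subst measure_distr) (auto intro!: arg_cong[where f=prob])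
  also have "\<dots> = measure lborel ({0<..<1} \<inter> {..x}) / measure lborel {0<..<1::real}"
    unfolding assms(2) by (subst measure_uniform_measure) auto
  also have "{0<..<1} \<inter> {..x} = (if x < 1 then {0<..x} else {0<..<1})"
    using assms(4) by auto
  finally show ?thesis using assms(3,4) by simp
qed

lemma prob_uniform_gt:
  assumes "X \<in> borel_measurable M" and "distr M lborel X = uniform_measure lborel {0<..<1}"
    and "0 \<le> x" "x \<le> 1"
  shows "prob {\<omega> \<in> space M. x < X \<omega>} = 1 - x"
proof -
  have "{\<omega> \<in> space M. x < X \<omega>} = space M - {\<omega> \<in> space M. X \<omega> \<le> x}" by auto
  then show ?thesis
    using assms prob_uniform_le[OF assms] by (simp add: prob_compl)
qed

lemma prob_indep_var_conj:
  assumes "indep_var borel U borel V" and "A \<in> sets borel" and "B \<in> sets borel"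
  shows "prob {\<omega> \<in> space M. U \<omega> \<in> A \<and> V \<omega> \<in> B} =
         prob {\<omega> \<in> space M. U \<omega> \<in> A} * prob {\<omega> \<in> space M. V \<omega> \<in> B}"
  using indep_varD[OF assms] by (simp add: vimage_def Int_def conj_commute)

lemma
  fixes W :: "'a \<Rightarrow> real"
  assumes "W \<in> borel_measurable M" and "finite V" and "\<And>\<omega>. \<omega> \<in> space M \<Longrightarrow> W \<omega> \<in> V"
  shows expectation_finite_range:
      "expectation (\<lambda>\<omega>. f (W \<omega>)) = (\<Sum>v\<in>V. f v * prob {\<omega> \<in> space M. W \<omega> = v})"
    and integrable_finite_range: "integrable M (\<lambda>\<omega>. f (W \<omega>))"
proof -
  let ?E = "\<lambda>v. {\<omega> \<in> space M. W \<omega> = v}"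
  have events: "?E v \<in> events" for v
    using assms(1) by measurable
  have decomp: "f (W \<omega>) = (\<Sum>v\<in>V. f v * indicator (?E v) \<omega>)" if "\<omega> \<in> space M" for \<omega>
  proof -
    have "(\<Sum>v\<in>V. f v * indicator (?E v) \<omega>) = (\<Sum>v\<in>V. if v = W \<omega> then f (W \<omega>) else 0)"
      using that by (intro sum.cong) (auto simp: indicator_def)
    then show ?thesis using assms(2,3) that by simp
  qed
  have integrable: "integrable M (\<lambda>\<omega>. \<Sum>v\<in>V. f v * indicator (?E v) \<omega>)"
    using events by (auto simp: emeasure_eq_measure)
  moreover have "integrable M (\<lambda>\<omega>. f (W \<omega>)) \<longleftrightarrow>
      integrable M (\<lambda>\<omega>. \<Sum>v\<in>V. f v * indicator (?E v) \<omega>)"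
    using decomp by (intro Bochner_Integration.integrable_cong) auto
  ultimately show "integrable M (\<lambda>\<omega>. f (W \<omega>))" by simp
  have "expectation (\<lambda>\<omega>. f (W \<omega>)) = expectation (\<lambda>\<omega>. \<Sum>v\<in>V. f v * indicator (?E v) \<omega>)"
    using decomp by (intro Bochner_Integration.integral_cong) auto
  also have "\<dots> = (\<Sum>v\<in>V. f v * prob (?E v))"
    using events
    by (subst Bochner_Integration.integral_sum) (auto simp: emeasure_eq_measure Int_absorb2)
  finally show "expectation (\<lambda>\<omega>. f (W \<omega>)) = (\<Sum>v\<in>V. f v * prob (?E v))" .
qed

lemma prob_uniform_le_indep_finite_range:
  fixes W :: "'a \<Rightarrow> real"
  assumes X: "X \<in> borel_measurable M" "distr M lborel X = uniform_measure lborel {0<..<1}"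
    and W: "W \<in> borel_measurable M" "finite V" "\<And>\<omega>. \<omega> \<in> space M \<Longrightarrow> W \<omega> \<in> V"
    and indep: "indep_var borel X borel W"
    and h: "\<And>v. v \<in> V \<Longrightarrow> 0 \<le> h v \<and> h v \<le> 1"
  shows "prob {\<omega> \<in> space M. X \<omega> \<le> h (W \<omega>)} = expectation (\<lambda>\<omega>. h (W \<omega>))"
proof -
  let ?E = "\<lambda>v. {\<omega> \<in> space M. X \<omega> \<in> {..h v} \<and> W \<omega> \<in> {v}}"
  have "prob {\<omega> \<in> space M. X \<omega> \<le> h (W \<omega>)} = prob (\<Union>v\<in>V. ?E v)"
    using W(3) by (intro arg_cong[where f=prob]) auto
  also have "\<dots> = (\<Sum>v\<in>V. prob (?E v))"
    using X(1) W(1,2) by (intro finite_measure_finite_Union) (auto simp: disjoint_family_on_def)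
  also have "\<dots> = (\<Sum>v\<in>V. h v * prob {\<omega> \<in> space M. W \<omega> = v})"
  proof (rule sum.cong)
    fix v assume "v \<in> V"
    have "prob (?E v) = prob {\<omega> \<in> space M. X \<omega> \<le> h v} * prob {\<omega> \<in> space M. W \<omega> \<in> {v}}"
      using prob_indep_var_conj[OF indep, of "{..h v}" "{v}"] by simp
    then show "prob (?E v) = h v * prob {\<omega> \<in> space M. W \<omega> = v}"
      using prob_uniform_le[OF X] h[OF \<open>v \<in> V\<close>] by simp
  qed simp
  also have "\<dots> = expectation (\<lambda>\<omega>. h (W \<omega>))"
    using expectation_finite_range[OF W] ..
  finally show ?thesis .
qed

lemma prob_uniform_below_scaled_threshold:
  fixes W :: "'a \<Rightarrow> real"
  assumes X: "X \<in> borel_measurable M" "distr M lborel X = uniform_measure lborel {0<..<1}"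
    and W: "W \<in> borel_measurable M" "finite V" "\<And>\<omega>. \<omega> \<in> space M \<Longrightarrow> W \<omega> \<in> V"
    and indep: "indep_var borel X borel W"
    and "V \<subseteq> {0..}" and "1 \<le> S" and "0 \<le> lam" "lam < 1" and "0 \<le> \<alpha>" "\<alpha> \<le> 1"
  shows "prob {\<omega> \<in> space M. X \<omega> \<le> \<alpha> * (1 - lam) / (S + W \<omega>)} =
         \<alpha> * expectation (\<lambda>\<omega>. indicator {lam<..} (X \<omega>) * (1 / (S + W \<omega>)))"
proof -
  have above_int: "integrable M (\<lambda>\<omega>. indicator {lam<..} (X \<omega>) :: real)"
    using X(1) by (intro integrable_const_bound[where B=1]) (auto simp: indicator_def)
  have "expectation (\<lambda>\<omega>. indicator {lam<..} (X \<omega>)) =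
        expectation (indicator {\<omega> \<in> space M. lam < X \<omega>} :: 'a \<Rightarrow> real)"
    by (intro Bochner_Integration.integral_cong) (auto simp: indicator_def)
  also have "\<dots> = prob {\<omega> \<in> space M. lam < X \<omega>}"
    by (simp add: Int_absorb2)
  finally have above: "expectation (\<lambda>\<omega>. indicator {lam<..} (X \<omega>)) = 1 - lam"
    using prob_uniform_gt[OF X] \<open>0 \<le> lam\<close> \<open>lam < 1\<close> by simp
  have indep': "indep_var borel (\<lambda>\<omega>. indicator {lam<..} (X \<omega>) :: real) borel (\<lambda>\<omega>. 1 / (S + W \<omega>))"
    by (rule indep_var_compose[unfolded comp_def, OF indep]) auto
  have "prob {\<omega> \<in> space M. X \<omega> \<le> \<alpha> * (1 - lam) / (S + W \<omega>)} =
        expectation (\<lambda>\<omega>. \<alpha> * (1 - lam) / (S + W \<omega>))"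
  proof (rule prob_uniform_le_indep_finite_range[OF X W indep])
    fix v assume "v \<in> V"
    then have "1 \<le> S + v" using assms by auto
    moreover have "\<alpha> * (1 - lam) \<le> 1" using assms by (intro mult_le_one) auto
    ultimately show "0 \<le> \<alpha> * (1 - lam) / (S + v) \<and> \<alpha> * (1 - lam) / (S + v) \<le> 1"
      using assms by (auto simp: divide_le_eq)
  qed
  also have "\<dots> = \<alpha> * ((1 - lam) * expectation (\<lambda>\<omega>. 1 / (S + W \<omega>)))"
    using integral_mult_right_zero[of M "\<alpha> * (1 - lam)" "\<lambda>\<omega>. 1 / (S + W \<omega>)"] by simp
  also have "\<dots> = \<alpha> * expectation (\<lambda>\<omega>. indicator {lam<..} (X \<omega>) * (1 / (S + W \<omega>)))"
    using indep_var_lebesgue_integral[OF indep' above_int integrable_finite_range[OF W]] above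
    by simp
  finally show ?thesis .
qed

lemma indep_var_entry_other_blocks:
  assumes indep: "indep_vars (\<lambda>i. PiM (J i) (\<lambda>_. borel)) (\<lambda>i \<omega>. \<lambda>j\<in>J i. X i j \<omega>) I"
    and "i \<in> I" "j \<in> J i"
    and f: "f \<in> borel_measurable (PiM (I - {i}) (\<lambda>k. PiM (J k) (\<lambda>_. borel)))"
  shows "indep_var borel (X i j) borel (\<lambda>\<omega>. f (\<lambda>k\<in>I - {i}. \<lambda>j\<in>J k. X k j \<omega>))"
proof -
  have "indep_var (PiM {i} (\<lambda>k. PiM (J k) (\<lambda>_. borel))) (\<lambda>\<omega>. \<lambda>k\<in>{i}. \<lambda>j\<in>J k. X k j \<omega>)
          (PiM (I - {i}) (\<lambda>k. PiM (J k) (\<lambda>_. borel))) (\<lambda>\<omega>. \<lambda>k\<in>I - {i}. \<lambda>j\<in>J k. X k j \<omega>)"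
    using indep_var_restrict[OF indep] \<open>i \<in> I\<close> by auto
  then have "indep_var borel ((\<lambda>z. z i j) \<circ> (\<lambda>\<omega>. \<lambda>k\<in>{i}. \<lambda>j\<in>J k. X k j \<omega>))
               borel (f \<circ> (\<lambda>\<omega>. \<lambda>k\<in>I - {i}. \<lambda>j\<in>J k. X k j \<omega>))"
    using f measurable_entry_PiM[of i "{i}" j J] \<open>j \<in> J i\<close> by (intro indep_var_compose) auto
  moreover have "(\<lambda>z. z i j) \<circ> (\<lambda>\<omega>. \<lambda>k\<in>{i}. \<lambda>j\<in>J k. X k j \<omega>) = X i j"
    using \<open>j \<in> J i\<close> by auto
  ultimately show ?thesis by (simp add: comp_def)
qed

end

lemma hyp_idx_eq_Sigma: "hyp_idx b s = Sigma {1..b} (\<lambda>i. {1..s i})"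
  by (auto simp: hyp_idx_def)

lemma finite_hyp_idx: "finite (hyp_idx b s)"
  by (simp add: hyp_idx_eq_Sigma)

lemma card_hyp_idx: "card (hyp_idx b s) = n_total b s"
  by (simp add: hyp_idx_eq_Sigma card_SigmaI n_total_def)

lemma block_size_le_s_max: "k \<in> {1..b} \<Longrightarrow> s k \<le> s_max b s"
  by (simp add: s_max_def)

lemma one_le_s_max: "(i, j) \<in> hyp_idx b s \<Longrightarrow> 1 \<le> s_max b s"
  using block_size_le_s_max[of i b s] by (auto simp: hyp_idx_def)

definition count_above :: "(nat \<times> nat) set \<Rightarrow> real \<Rightarrow> nat set \<Rightarrow> (nat \<Rightarrow> nat \<Rightarrow> real) \<Rightarrow> nat" where
  "count_above T lam K p = card {(k, j) \<in> T. k \<in> K \<and> lam < p k j}"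

lemma count_above_eq_sum:
  assumes "finite T"
  shows "real (count_above T lam K p) = (\<Sum>(k, j)\<in>T. indicator K k * indicator {lam<..} (p k j))"
proof -
  have "{(k, j) \<in> T. k \<in> K \<and> lam < p k j} = {x \<in> T. fst x \<in> K \<and> lam < p (fst x) (snd x)}"
    by auto
  then have "real (count_above T lam K p) = (\<Sum>x\<in>{x \<in> T. fst x \<in> K \<and> lam < p (fst x) (snd x)}. 1)"
    unfolding count_above_def by simp
  also have "\<dots> = (\<Sum>x\<in>T. if fst x \<in> K \<and> lam < p (fst x) (snd x) then 1 else 0)"
    using assms by (rule sum.inter_filter)
  finally show ?thesis
    by (auto simp: indicator_def case_prod_unfold intro!: sum.cong)
qed

lemma count_above_cong:
  assumes "\<And>k j. (k, j) \<in> T \<Longrightarrow> k \<in> K \<Longrightarrow> p k j = q k j"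
  shows "count_above T lam K p = count_above T lam K q"
  unfolding count_above_def using assms by (intro arg_cong[where f=card]) auto

lemma measurable_count_above:
  assumes "finite T" and "\<And>k j. (k, j) \<in> T \<Longrightarrow> k \<in> K \<Longrightarrow> j \<in> J k"
  shows "(\<lambda>z. real (count_above T lam K z)) \<in> borel_measurable (PiM K (\<lambda>k. PiM (J k) (\<lambda>_. borel)))"
  unfolding count_above_eq_sum[OF \<open>finite T\<close>]
proof (intro borel_measurable_sum, clarify)
  fix k j assume "(k, j) \<in> T"
  then show "(\<lambda>z. indicator K k * indicator {lam<..} (z k j) :: real) \<in>
      borel_measurable (PiM K (\<lambda>k. PiM (J k) (\<lambda>_. borel)))"
  proof (cases "k \<in> K")
    case True
    with \<open>(k, j) \<in> T\<close> assms(2) have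
      "(\<lambda>z. z k j) \<in> borel_measurable (PiM K (\<lambda>k. PiM (J k) (\<lambda>_. borel)))"
      by (intro measurable_entry_PiM)
    then have "(\<lambda>z. indicator {lam<..} (z k j) :: real)
        \<in> borel_measurable (PiM K (\<lambda>k. PiM (J k) (\<lambda>_. borel)))"
      by (rule measurable_compose) simp
    then show ?thesis using True by simp
  qed simp
qed

lemma count_above_le_card: "finite T \<Longrightarrow> count_above T lam K p \<le> card T"
  unfolding count_above_def by (rule card_mono) auto

lemma count_above_le_block_size:
  assumes "T \<subseteq> hyp_idx b s"
  shows "count_above T lam {k} p \<le> s k"
proof -
  have "{(k', j) \<in> T. k' \<in> {k} \<and> lam < p k' j} \<subseteq> {k} \<times> {1..s k}"
    using assms by (auto simp: hyp_idx_def)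
  from card_mono[OF _ this] show ?thesis by (simp add: count_above_def)
qed

lemma count_above_sum_blocks:
  assumes "finite T" and "finite K"
  shows "count_above T lam K p = (\<Sum>k\<in>K. count_above T lam {k} p)"
proof -
  have "{(k, j) \<in> T. k \<in> K \<and> lam < p k j} = (\<Union>k\<in>K. {(k', j) \<in> T. k' \<in> {k} \<and> lam < p k' j})"
    by auto
  then show ?thesis
    unfolding count_above_def
    by (simp only:) (rule card_UN_disjoint, use assms in \<open>auto intro: rev_finite_subset[OF assms(1)]\<close>)
qed

lemma n_total_minus_R_count:
  "real (n_total b s) - real (R_count b s P lam \<omega>) = card {(i, j) \<in> hyp_idx b s. lam < P i j \<omega>}"
proof -
  have "card (hyp_idx b s) =
      card ({(i, j) \<in> hyp_idx b s. lam < P i j \<omega>} \<union> {(i, j) \<in> hyp_idx b s. P i j \<omega> \<le> lam})"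
    by (rule arg_cong[where f=card]) auto
  also have "\<dots> = card {(i, j) \<in> hyp_idx b s. lam < P i j \<omega>} + R_count b s P lam \<omega>"
    unfolding R_count_def
    by (rule card_Un_disjoint) (auto intro: rev_finite_subset[OF finite_hyp_idx])
  finally show ?thesis by (simp add: card_hyp_idx)
qed

lemma count_above_le_n_total_minus_R_count:
  assumes "T \<subseteq> hyp_idx b s"
  shows "real (count_above T lam K (\<lambda>k j. P k j \<omega>)) \<le> real (n_total b s) - real (R_count b s P lam \<omega>)"
  unfolding n_total_minus_R_count count_above_def of_nat_le_iff
  using assms by (intro card_mono) (auto intro: rev_finite_subset[OF finite_hyp_idx])

lemma sum_above_leave_one_out_le_1:
  assumes "T \<subseteq> hyp_idx b s"
  shows "(\<Sum>(i, j)\<in>T. indicator {lam<..} (p i j) *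
           (1 / (real (s_max b s) + real (count_above T lam ({1..b} - {i}) p)))) \<le> 1"
proof -
  define Y where "Y k = real (count_above T lam {k} p)" for k
  define g where "g i = 1 / (real (s_max b s) + (\<Sum>k\<in>{1..b} - {i}. Y k))" for i
  have "finite T" using assms by (rule rev_finite_subset[OF finite_hyp_idx])
  have leave_out: "real (count_above T lam ({1..b} - {i}) p) = (\<Sum>k\<in>{1..b} - {i}. Y k)" for i
    using count_above_sum_blocks[OF \<open>finite T\<close>, of "{1..b} - {i}"] by (simp add: Y_def)
  have "(\<Sum>(i, j)\<in>T. indicator {lam<..} (p i j) *
           (1 / (real (s_max b s) + real (count_above T lam ({1..b} - {i}) p)))) =
        (\<Sum>x\<in>{x \<in> T. lam < p (fst x) (snd x)}. g (fst x))"
    using \<open>finite T\<close>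
    by (auto simp: sum.inter_filter leave_out[simplified] g_def case_prod_unfold indicator_def intro!: sum.cong)
  also have "\<dots> = (\<Sum>i\<in>{1..b}. real (card {x \<in> {x \<in> T. lam < p (fst x) (snd x)}. fst x = i}) * g i)"
    using \<open>finite T\<close> assms by (intro sum_fun_comp) (auto simp: hyp_idx_def)
  also have "\<dots> = (\<Sum>i\<in>{1..b}. Y i * g i)"
    unfolding Y_def count_above_def by (auto intro!: sum.cong arg_cong[where f=card])
  also have "\<dots> \<le> 1"
    unfolding g_def
  proof (simp only: times_divide_eq_right mult_1_right, rule sum_divide_leave_one_out_le_1)
    fix k assume "k \<in> {1..b}"
    then show "0 \<le> Y k \<and> Y k \<le> real (s_max b s)"
      using count_above_le_block_size[OF assms, of lam k p] block_size_le_s_max[of k b s]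
      by (simp add: Y_def)
  qed simp
  finally show ?thesis .
qed

lemma reject_imp_below_threshold:
  assumes "T \<subseteq> hyp_idx b s" and "(i, j) \<in> T" and "0 < \<alpha>" and "lam < 1"
    and reject: "P i j \<omega> \<le> \<alpha> / n0_hat b s P lam \<omega>"
  shows "P i j \<omega> \<le> \<alpha> * (1 - lam) /
           (real (s_max b s) + real (count_above T lam ({1..b} - {i}) (\<lambda>k j. P k j \<omega>)))"
proof -
  define D where "D = real (s_max b s) + real (count_above T lam ({1..b} - {i}) (\<lambda>k j. P k j \<omega>))"
  have "1 \<le> D" using one_le_s_max[of i j b s] assms(1,2) by (auto simp: D_def)
  have "D / (1 - lam) \<le> n0_hat b s P lam \<omega>"
    unfolding n0_hat_def D_def using count_above_le_n_total_minus_R_count[OF assms(1)] \<open>lam < 1\<close>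
    by (intro divide_right_mono) auto
  moreover have "0 < D / (1 - lam)" using \<open>1 \<le> D\<close> \<open>lam < 1\<close> by simp
  ultimately have "\<alpha> / n0_hat b s P lam \<omega> \<le> \<alpha> / (D / (1 - lam))"
    using \<open>0 < \<alpha>\<close> by (intro divide_left_mono mult_pos_pos) auto
  with reject show ?thesis by (simp add: D_def)
qed

locale block_p_values = prob_space +
  fixes b :: nat and s :: "nat \<Rightarrow> nat" and P :: "nat \<Rightarrow> nat \<Rightarrow> 'a \<Rightarrow> real"
    and T :: "(nat \<times> nat) set"
  assumes measurable_P: "\<And>i j. (i, j) \<in> hyp_idx b s \<Longrightarrow> P i j \<in> borel_measurable M"
    and true_nulls: "T \<subseteq> hyp_idx b s"
    and uniform_P: "\<And>i j. (i, j) \<in> T \<Longrightarrow> distr M lborel (P i j) = uniform_measure lborel {0<..<1}"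
    and indep_blocks:
      "indep_vars (\<lambda>i. PiM {1..s i} (\<lambda>_. borel)) (\<lambda>i \<omega>. \<lambda>j\<in>{1..s i}. P i j \<omega>) {1..b}"
begin

definition others_above :: "real \<Rightarrow> nat \<Rightarrow> 'a \<Rightarrow> real" where
  "others_above lam i \<omega> = real (count_above T lam ({1..b} - {i}) (\<lambda>k j. P k j \<omega>))"

definition threshold_weight :: "real \<Rightarrow> nat \<times> nat \<Rightarrow> 'a \<Rightarrow> real" where
  "threshold_weight lam p \<omega> =
     indicator {lam<..} (P (fst p) (snd p) \<omega>) * (1 / (real (s_max b s) + others_above lam (fst p) \<omega>))"

lemma finite_true_nulls: "finite T"
  using true_nulls by (rule rev_finite_subset[OF finite_hyp_idx])

lemma indep_var_p_value_others_above:
  assumes "(i, j) \<in> T"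
  shows "indep_var borel (P i j) borel (others_above lam i)"
proof -
  have "i \<in> {1..b}" "j \<in> {1..s i}" using assms true_nulls by (auto simp: hyp_idx_def)
  moreover have "(\<lambda>z. real (count_above T lam ({1..b} - {i}) z))
      \<in> borel_measurable (PiM ({1..b} - {i}) (\<lambda>k. PiM {1..s k} (\<lambda>_. borel)))"
    using finite_true_nulls true_nulls by (intro measurable_count_above) (auto simp: hyp_idx_def)
  ultimately have "indep_var borel (P i j) borel (\<lambda>\<omega>. real (count_above T lam ({1..b} - {i})
      (\<lambda>k\<in>{1..b} - {i}. \<lambda>j\<in>{1..s k}. P k j \<omega>)))"
    by (rule indep_var_entry_other_blocks[OF indep_blocks])
  moreover have "count_above T lam ({1..b} - {i}) (\<lambda>k\<in>{1..b} - {i}. \<lambda>j\<in>{1..s k}. P k j \<omega>) =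
      count_above T lam ({1..b} - {i}) (\<lambda>k j. P k j \<omega>)" for \<omega>
    using true_nulls by (intro count_above_cong) (auto simp: hyp_idx_def)
  ultimately show ?thesis unfolding others_above_def[abs_def] by simp
qed

lemma measurable_others_above:
  "p \<in> T \<Longrightarrow> others_above lam (fst p) \<in> borel_measurable M"
  using indep_var_p_value_others_above[of "fst p" "snd p"] by (rule indep_var_rv2) simp

lemma measurable_true_null: "p \<in> T \<Longrightarrow> P (fst p) (snd p) \<in> borel_measurable M"
  using true_nulls measurable_P by auto

lemma one_le_s_max_true_null: "(i, j) \<in> T \<Longrightarrow> 1 \<le> real (s_max b s)"
  using one_le_s_max[of i j b s] true_nulls by auto

lemma prob_p_value_below_threshold:
  assumes "(i, j) \<in> T" and "0 \<le> lam" "lam < 1" and "0 \<le> \<alpha>" "\<alpha> \<le> 1"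
  shows "prob {\<omega> \<in> space M. P i j \<omega> \<le> \<alpha> * (1 - lam) / (real (s_max b s) + others_above lam i \<omega>)} =
         \<alpha> * expectation (threshold_weight lam (i, j))"
  unfolding threshold_weight_def fst_conv snd_conv
proof (rule prob_uniform_below_scaled_threshold[where V="real ` {..card T}"])
  show "P i j \<in> borel_measurable M"
    using measurable_true_null[OF assms(1)] by simp
  show "others_above lam i \<in> borel_measurable M"
    using measurable_others_above[OF assms(1)] by simp
  show "others_above lam i \<omega> \<in> real ` {..card T}" for \<omega>
    unfolding others_above_def using count_above_le_card[OF finite_true_nulls] by (intro imageI) auto
  show "real ` {..card T} \<subseteq> {0..}" by auto
  show "1 \<le> real (s_max b s)"
    using one_le_s_max_true_null[OF assms(1)] .
qed (use assms uniform_P indep_var_p_value_others_above in simp_all)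

lemma integrable_threshold_weight:
  assumes "p \<in> T"
  shows "integrable M (threshold_weight lam p)"
proof (rule integrable_const_bound[where B=1])
  show "AE \<omega> in M. norm (threshold_weight lam p \<omega>) \<le> 1"
    using one_le_s_max_true_null[of "fst p" "snd p"] assms
    by (auto simp: threshold_weight_def others_above_def indicator_def)
  note [measurable] = measurable_true_null[OF assms] measurable_others_above[OF assms]
  show "threshold_weight lam p \<in> borel_measurable M"
    unfolding threshold_weight_def by measurable
qed

lemma sum_expectation_threshold_weight_le_1:
  "(\<Sum>p\<in>T. expectation (threshold_weight lam p)) \<le> 1"
proof -
  have "(\<Sum>p\<in>T. threshold_weight lam p \<omega>) \<le> 1" for \<omega>
    using sum_above_leave_one_out_le_1[OF true_nulls, of lam "\<lambda>k j. P k j \<omega>"]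
    by (simp add: threshold_weight_def others_above_def case_prod_unfold)
  then have "expectation (\<lambda>\<omega>. \<Sum>p\<in>T. threshold_weight lam p \<omega>) \<le> 1"
    using integrable_threshold_weight by (intro integral_le_const) auto
  then show ?thesis
    using integrable_threshold_weight by (simp add: Bochner_Integration.integral_sum)
qed

lemma fwer_le_sum_prob_below_threshold:
  assumes "0 < \<alpha>" and "lam < 1"
  shows "measure M {\<omega> \<in> space M. \<exists>(i, j) \<in> T. P i j \<omega> \<le> \<alpha> / n0_hat b s P lam \<omega>} \<le>
    (\<Sum>(i, j)\<in>T. prob {\<omega> \<in> space M.
       P i j \<omega> \<le> \<alpha> * (1 - lam) / (real (s_max b s) + others_above lam i \<omega>)})"
proof -
  define F where "F p = {\<omega> \<in> space M. P (fst p) (snd p) \<omega> \<le>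
    \<alpha> * (1 - lam) / (real (s_max b s) + others_above lam (fst p) \<omega>)}" for p
  have F_events: "F p \<in> events" if "p \<in> T" for p
  proof -
    note [measurable] = measurable_true_null[OF that] measurable_others_above[OF that]
    show ?thesis unfolding F_def by measurable
  qed
  have "{\<omega> \<in> space M. \<exists>(i, j) \<in> T. P i j \<omega> \<le> \<alpha> / n0_hat b s P lam \<omega>} \<subseteq> (\<Union>p\<in>T. F p)"
  proof safe
    fix \<omega> i j assume "\<omega> \<in> space M" "(i, j) \<in> T" "P i j \<omega> \<le> \<alpha> / n0_hat b s P lam \<omega>"
    with reject_imp_below_threshold[OF true_nulls \<open>(i, j) \<in> T\<close> assms]
    show "\<omega> \<in> (\<Union>p\<in>T. F p)"
      unfolding F_def others_above_def by (intro UN_I[of "(i, j)"]) auto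
  qed
  then have "measure M {\<omega> \<in> space M. \<exists>(i, j) \<in> T. P i j \<omega> \<le> \<alpha> / n0_hat b s P lam \<omega>}
      \<le> prob (\<Union>p\<in>T. F p)"
    using F_events finite_true_nulls by (intro finite_measure_mono) auto
  also have "\<dots> \<le> (\<Sum>p\<in>T. prob (F p))"
    using F_events finite_true_nulls by (intro finite_measure_subadditive_finite) auto
  finally show ?thesis by (simp add: F_def case_prod_unfold)
qed

theorem fwer_le:
  assumes "0 < \<alpha>" "\<alpha> \<le> 1" and "0 \<le> lam" "lam < 1"
  shows "measure M {\<omega> \<in> space M. \<exists>(i, j) \<in> T. P i j \<omega> \<le> \<alpha> / n0_hat b s P lam \<omega>} \<le> \<alpha>"
proof -
  have "measure M {\<omega> \<in> space M. \<exists>(i, j) \<in> T. P i j \<omega> \<le> \<alpha> / n0_hat b s P lam \<omega>} \<le>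
      (\<Sum>p\<in>T. \<alpha> * expectation (threshold_weight lam p))"
    using fwer_le_sum_prob_below_threshold[OF assms(1,4)] prob_p_value_below_threshold assms
    by (simp add: case_prod_unfold)
  also have "\<dots> \<le> \<alpha>"
    using sum_expectation_threshold_weight_le_1[of lam] \<open>0 < \<alpha>\<close>
    by (simp add: sum_distrib_left[symmetric])
  finally show ?thesis .
qed

end

theorem mainTheorem6:
  fixes M :: "'a measure" and b :: nat and s :: "nat \<Rightarrow> nat"
    and P :: "nat \<Rightarrow> nat \<Rightarrow> 'a \<Rightarrow> real"
    and T :: "(nat \<times> nat) set" and \<alpha> lam :: real
  assumes "prob_space M"
    and "b \<ge> 1"
    and meas: "\<And>i j. (i, j) \<in> hyp_idx b s \<Longrightarrow> P i j \<in> borel_measurable M"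
    and true_nulls: "T \<subseteq> hyp_idx b s"
    and unif: "\<And>i j. (i, j) \<in> T \<Longrightarrow>
                 distr M lborel (P i j) = uniform_measure lborel {0<..<1}"
    and indep: "prob_space.indep_vars M (\<lambda>i. PiM {1..s i} (\<lambda>_. borel))
                  (\<lambda>i \<omega>. \<lambda>j\<in>{1..s i}. P i j \<omega>) {1..b}"
    and "0 < \<alpha>" and "\<alpha> < 1"
    and "(2 * real b + 3) powr (- 2 / (real b + 2)) \<le> lam" and "lam < 1"
  shows "measure M {\<omega> \<in> space M. \<exists>(i, j) \<in> T. P i j \<omega> \<le> \<alpha> / n0_hat b s P lam \<omega>} \<le> \<alpha>"
proof -
  interpret block_p_values M b s P T
    by (rule block_p_values.intro[OF \<open>prob_space M\<close>], unfold_locales) (fact meas true_nulls unif indep)+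
  have "0 < (2 * real b + 3) powr (- 2 / (real b + 2))" by simp
  then have "0 \<le> lam" using \<open>(2 * real b + 3) powr (- 2 / (real b + 2)) \<le> lam\<close> by linarith
  with \<open>0 < \<alpha>\<close> \<open>\<alpha> < 1\<close> \<open>lam < 1\<close> show ?thesis by (intro fwer_le) auto
qed

end
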